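(* Consider the R-model with $f(\tau)=\sqrt\tau$, $g(\tau)=\sqrt\tau\ln\tau$ ($\tau>0$) and $\alpha=a/b$ non-constant. Then $d\chi\wedge d\pi=0$ (with $\chi=\dot p/\dot\rho$, $\pi=p/\rho$) if and only if $\beta=\alpha+\tilde c$ for a constant $\tilde c$ (necessarily $\tilde c\neq0$), where $\beta=a'/b'$. In that case $b(r)=e^{\alpha(r)/\tilde c}$ up to a constant factor, $p=\frac{1}{3\tau^2}$ and $$\rho=\frac{1}{3\tau^2}\frac{(2+\alpha+\ln\tau)(2+\alpha+\tilde c+\ln\tau)}{(\alpha+\ln\tau)(\alpha+\tilde c+\ln\tau)}.$$
   Context: An R-model admitting an orthogonal flat synchronisation is the metric $ds^2=-d\tau^2+(\partial_rY)^2dr^2+Y^2d\Omega^2$ ($d\Omega^2$ the unit 2-sphere metric), with $Y=Z^{2/3}$, $Z(\tau,r)=a(r)f(\tau)+b(r)g(\tau)$, where $f,g$ satisfy $\ddot f/f=\ddot g/g=-\frac34p(\tau)$ and $\dot gf-\dot fg=1$. It is a perfect fluid with $u=\partial_\tau$, $p=-\frac43\ddot f/f$, $\rho=\frac43\frac{\dot Z\,\dot Z'}{Z\,Z'}$ (prime $=\partial_r$, dot $=\partial_\tau$). Functions $a,b$ with $b\neq0$, $b'\neq0$; $\alpha=a/b$, $\beta=a'/b'$. *)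

theory Defs
  imports "HOL-Analysis.Analysis"
begin

definition smooth_on :: "real set \<Rightarrow> (real \<Rightarrow> real) \<Rightarrow> bool" where
  "smooth_on U h \<longleftrightarrow> (\<forall>n. \<forall>r\<in>U. ((deriv ^^ n) h) differentiable (at r))"

text \<open>R-model quantities, as functions of (tau, r). Dot = partial in tau, prime = partial in r.\<close>
definition RZ :: "(real \<Rightarrow> real) \<Rightarrow> (real \<Rightarrow> real) \<Rightarrow> (real \<Rightarrow> real) \<Rightarrow> (real \<Rightarrow> real)
    \<Rightarrow> real \<Rightarrow> real \<Rightarrow> real" where
  "RZ f g a b \<tau> r = a r * f \<tau> + b r * g \<tau>"

definition Rp :: "(real \<Rightarrow> real) \<Rightarrow> real \<Rightarrow> real" where
  "Rp f \<tau> = - 4 / 3 * deriv (deriv f) \<tau> / f \<tau>"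

definition Rrho :: "(real \<Rightarrow> real) \<Rightarrow> (real \<Rightarrow> real) \<Rightarrow> (real \<Rightarrow> real) \<Rightarrow> (real \<Rightarrow> real)
    \<Rightarrow> real \<Rightarrow> real \<Rightarrow> real" where
  "Rrho f g a b \<tau> r =
     (let Z = RZ f g a b;
          Zdot = deriv (\<lambda>t. Z t r) \<tau>;
          Zpr = deriv (\<lambda>s. Z \<tau> s) r;
          Zdotpr = deriv (\<lambda>s. deriv (\<lambda>t. Z t s) \<tau>) r
      in 4 / 3 * (Zdot * Zdotpr) / (Z \<tau> r * Zpr))"

definition Rchi where
  "Rchi f g a b \<tau> r = deriv (Rp f) \<tau> / deriv (\<lambda>t. Rrho f g a b t r) \<tau>"

definition Rpi where
  "Rpi f g a b \<tau> r = Rp f \<tau> / Rrho f g a b \<tau> r"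

text \<open>Coordinate expression of the 2-form dF \<and> dG in coordinates (tau, r):
  (dF \<and> dG) = (F_tau G_r - F_r G_tau) d tau \<and> d r.\<close>
definition wedge_coeff :: "(real \<Rightarrow> real \<Rightarrow> real) \<Rightarrow> (real \<Rightarrow> real \<Rightarrow> real) \<Rightarrow> real \<Rightarrow> real \<Rightarrow> real" where
  "wedge_coeff F G \<tau> r =
     deriv (\<lambda>t. F t r) \<tau> * deriv (\<lambda>s. G \<tau> s) r - deriv (\<lambda>s. F \<tau> s) r * deriv (\<lambda>t. G t r) \<tau>"

text \<open>The regular domain: tau > 0, r in U, where Z, Z', rho and rho-dot are nonzero
  (so that the metric is nondegenerate and chi, pi are defined).\<close>
definition Rdom where
  "Rdom f g a b U = {(\<tau>, r). \<tau> > 0 \<and> r \<in> U \<and> RZ f g a b \<tau> r \<noteq> 0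
      \<and> deriv (\<lambda>s. RZ f g a b \<tau> s) r \<noteq> 0 \<and> Rrho f g a b \<tau> r \<noteq> 0
      \<and> deriv (\<lambda>t. Rrho f g a b t r) \<tau> \<noteq> 0}"

end

theory Submission
  imports Defs
begin

text \<open>For \<open>f = \<surd>\<tau>\<close>, \<open>g = \<surd>\<tau> ln \<tau>\<close> one has \<open>Z = \<surd>\<tau> b (\<alpha> + ln \<tau>)\<close> and
  \<open>\<partial>\<^sub>rZ = \<surd>\<tau> \<partial>\<^sub>rb (\<beta> + ln \<tau>)\<close>, so \<open>p = 1/(3\<tau>\<^sup>2)\<close> and, in the variables \<open>P = 1/(\<alpha> + ln \<tau>)\<close>,
  \<open>Q = 1/(\<beta> + ln \<tau>)\<close>, both \<open>\<rho>/p\<close> and \<open>\<partial>\<^sub>\<tau>\<rho>/\<partial>\<^sub>\<tau>p\<close> are polynomials in \<open>P, Q\<close>. Hence \<open>\<chi>\<close> and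
  \<open>\<pi>\<close> are functions of \<open>(P, Q)\<close> alone, and \<open>d\<chi> \<and> d\<pi>\<close> is their Jacobian times
  \<open>dP \<and> dQ = P\<^sup>2 Q\<^sup>2 (\<partial>\<^sub>r\<beta> - \<partial>\<^sub>r\<alpha>) / \<tau> d\<tau> \<and> dr\<close>. The Jacobian is a nonzero multiple of
  \<open>(P - Q)(1 + P + Q + 2PQ)\<close>, so \<open>d\<chi> \<and> d\<pi> = 0\<close> forces \<open>\<partial>\<^sub>r\<beta> = \<partial>\<^sub>r\<alpha>\<close> wherever \<open>\<beta> \<noteq> \<alpha>\<close>,
  which on a connected set makes \<open>\<beta> - \<alpha>\<close> constant. Finally \<open>\<partial>\<^sub>r\<alpha> = \<partial>\<^sub>rb (\<beta> - \<alpha>) / b\<close>: for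
  \<open>\<beta> = \<alpha> + c\<close> this gives \<open>c \<noteq> 0\<close> (\<open>\<alpha>\<close> is not constant) and \<open>\<partial>\<^sub>r(b exp (-\<alpha>/c)) = 0\<close>.\<close>

lemma smooth_on_differentiable:
  "smooth_on U h \<Longrightarrow> r \<in> U \<Longrightarrow> h differentiable at r"
  unfolding smooth_on_def by (metis funpow_0)

lemma smooth_on_deriv_differentiable:
  "smooth_on U h \<Longrightarrow> r \<in> U \<Longrightarrow> deriv h differentiable at r"
  unfolding smooth_on_def by (metis funpow_0 funpow_Suc_right comp_apply One_nat_def)

lemma eventually_nhds_pos: "(x::real) > 0 \<Longrightarrow> \<forall>\<^sub>F y in nhds x. y > 0"
  using eventually_nhds_in_open[of "{0<..}" x] by simp

lemma isCont_eventually_nhds_neq: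
  fixes f :: "'a::t2_space \<Rightarrow> 'b::t1_space"
  assumes "isCont f x" and "f x \<noteq> c"
  shows "\<forall>\<^sub>F y in nhds x. f y \<noteq> c"
  using tendsto_imp_eventually_ne[OF isContD[OF assms(1)] assms(2)] assms(2)
  by (simp add: eventually_nhds_conv_at)

lemma deriv_eq_if_eventually_eq:
  assumes "\<forall>\<^sub>F x in nhds x\<^sub>0. f x = g x" and "(g has_real_derivative D) (at x\<^sub>0)"
  shows "deriv f x\<^sub>0 = D"
  using deriv_cong_ev[OF assms(1) refl] DERIV_imp_deriv[OF assms(2)] by simp

lemma DERIV_zero_connected_imp_constant:
  fixes h :: "real \<Rightarrow> real"
  assumes "open U" "connected U" "\<And>x. x \<in> U \<Longrightarrow> (h has_real_derivative 0) (at x)"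
  shows "\<exists>c. \<forall>x\<in>U. h x = c"
proof -
  have "continuous_on U h"
    using assms(3) by (intro continuous_at_imp_continuous_on) (blast intro: DERIV_isCont)
  then show ?thesis
    using DERIV_zero_connected_constant[OF assms(2,1) finite.emptyI] assms(3) by blast
qed

lemma DERIV_zero_off_zeros_connected_imp_constant:
  fixes h :: "real \<Rightarrow> real"
  assumes U: "open U" "connected U"
    and h: "\<And>x. x \<in> U \<Longrightarrow> (h has_real_derivative h' x) (at x)"
    and h'_zero: "\<And>x. x \<in> U \<Longrightarrow> h x \<noteq> 0 \<Longrightarrow> h' x = 0"
  shows "\<exists>c. \<forall>x\<in>U. h x = c"
proof -
  have "((\<lambda>x. h x * h x) has_real_derivative 0) (at x)" if "x \<in> U" for x
  proof -
    have hh: "h' x * h x = 0" using h'_zero[OF that] by (cases "h x = 0") simp_all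
    have "((\<lambda>x. h x * h x) has_real_derivative h' x * h x + h' x * h x) (at x)"
      using DERIV_mult[OF h h, OF that that] .
    then show ?thesis by (simp only: hh add_0_left)
  qed
  then obtain k where k: "\<And>x. x \<in> U \<Longrightarrow> h x * h x = k"
    using DERIV_zero_connected_imp_constant[OF U, of "\<lambda>x. h x * h x"] by blast
  show ?thesis
  proof (cases "k = 0")
    case True
    then show ?thesis using k by auto
  next
    case False
    then have "(h has_real_derivative 0) (at x)" if "x \<in> U" for x
      using h[OF that] h'_zero[OF that] k[OF that] by auto
    then show ?thesis using DERIV_zero_connected_imp_constant[OF U, of h] by blast
  qed
qed

lemma deriv_compose_pair:
  fixes X :: "real \<times> real \<Rightarrow> real"
  assumes X: "(X has_derivative (\<lambda>(h, k). A * h + B * k)) (at (p x, q x))"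
    and p: "p differentiable at x" and q: "q differentiable at x"
  shows "deriv (\<lambda>x. X (p x, q x)) x = A * deriv p x + B * deriv q x"
proof -
  have "((\<lambda>x. (p x, q x)) has_derivative (\<lambda>h. (deriv p x * h, deriv q x * h))) (at x)"
    using p q by (intro has_derivative_Pair)
      (simp_all add: DERIV_deriv_iff_real_differentiable[symmetric] has_field_derivative_def)
  from has_derivative_compose[OF this X]
  have "((\<lambda>x. X (p x, q x)) has_field_derivative A * deriv p x + B * deriv q x) (at x)"
    unfolding has_field_derivative_def
    by (rule has_derivative_eq_rhs) (auto simp: fun_eq_iff algebra_simps)
  then show ?thesis by (rule DERIV_imp_deriv)
qed

lemma has_derivative_inverse_pair:
  fixes R :: "real \<times> real \<Rightarrow> real"
  assumes "(R has_derivative (\<lambda>(h, k). A * h + B * k)) (at z)" and "R z \<noteq> 0"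
  shows "((\<lambda>z. 1 / R z) has_derivative
           (\<lambda>(h, k). (- A / (R z)\<^sup>2) * h + (- B / (R z)\<^sup>2) * k)) (at z)"
  using assms
  by (auto intro!: derivative_eq_intros
      simp: fun_eq_iff field_simps power2_eq_square split: prod.splits)

lemma wedge_coeff_cong_ev:
  assumes "\<forall>\<^sub>F t in nhds \<tau>. F t r = F' t r \<and> G t r = G' t r"
    and "\<forall>\<^sub>F s in nhds r. F \<tau> s = F' \<tau> s \<and> G \<tau> s = G' \<tau> s"
  shows "wedge_coeff F G \<tau> r = wedge_coeff F' G' \<tau> r"
proof -
  have "deriv (\<lambda>t. F t r) \<tau> = deriv (\<lambda>t. F' t r) \<tau>" "deriv (\<lambda>t. G t r) \<tau> = deriv (\<lambda>t. G' t r) \<tau>"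
    "deriv (\<lambda>s. F \<tau> s) r = deriv (\<lambda>s. F' \<tau> s) r" "deriv (\<lambda>s. G \<tau> s) r = deriv (\<lambda>s. G' \<tau> s) r"
    by (rule deriv_cong_ev[OF _ refl]; use assms in \<open>auto elim: eventually_mono\<close>)+
  then show ?thesis unfolding wedge_coeff_def by simp
qed

lemma wedge_coeff_compose:
  fixes X Y :: "real \<times> real \<Rightarrow> real"
  assumes X: "(X has_derivative (\<lambda>(h, k). X\<^sub>P * h + X\<^sub>Q * k)) (at (P \<tau> r, Q \<tau> r))"
    and Y: "(Y has_derivative (\<lambda>(h, k). Y\<^sub>P * h + Y\<^sub>Q * k)) (at (P \<tau> r, Q \<tau> r))"
    and P: "(\<lambda>t. P t r) differentiable at \<tau>" "(\<lambda>s. P \<tau> s) differentiable at r"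
    and Q: "(\<lambda>t. Q t r) differentiable at \<tau>" "(\<lambda>s. Q \<tau> s) differentiable at r"
  shows "wedge_coeff (\<lambda>t s. X (P t s, Q t s)) (\<lambda>t s. Y (P t s, Q t s)) \<tau> r
           = (X\<^sub>P * Y\<^sub>Q - X\<^sub>Q * Y\<^sub>P) * wedge_coeff P Q \<tau> r"
  unfolding wedge_coeff_def
    deriv_compose_pair[where p = "\<lambda>t. P t r" and q = "\<lambda>t. Q t r", OF X P(1) Q(1)]
    deriv_compose_pair[where p = "\<lambda>t. P t r" and q = "\<lambda>t. Q t r", OF Y P(1) Q(1)]
    deriv_compose_pair[where p = "\<lambda>s. P \<tau> s" and q = "\<lambda>s. Q \<tau> s", OF X P(2) Q(2)]
    deriv_compose_pair[where p = "\<lambda>s. P \<tau> s" and q = "\<lambda>s. Q \<tau> s", OF Y P(2) Q(2)]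
  by (simp add: algebra_simps)

lemma deriv_sqrt_pos: "t > 0 \<Longrightarrow> deriv (\<lambda>\<tau>. sqrt \<tau>) t = 1 / (2 * sqrt t)"
  by (rule DERIV_imp_deriv) (auto intro!: derivative_eq_intros simp: field_simps)

lemma Rp_sqrt:
  assumes "\<tau> > 0"
  shows "Rp (\<lambda>\<tau>. sqrt \<tau>) \<tau> = 1 / (3 * \<tau>\<^sup>2)"
proof -
  have "\<forall>\<^sub>F t in nhds \<tau>. deriv (\<lambda>\<tau>. sqrt \<tau>) t = 1 / (2 * sqrt t)"
    using eventually_nhds_pos[OF assms] by (rule eventually_mono) (rule deriv_sqrt_pos)
  moreover have "((\<lambda>t. 1 / (2 * sqrt t)) has_real_derivative - 1 / (4 * \<tau> * sqrt \<tau>)) (at \<tau>)"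
    using assms by (auto intro!: derivative_eq_intros simp: field_simps power2_eq_square)
  ultimately have "deriv (deriv (\<lambda>\<tau>. sqrt \<tau>)) \<tau> = - 1 / (4 * \<tau> * sqrt \<tau>)"
    by (rule deriv_eq_if_eventually_eq)
  then have "Rp (\<lambda>\<tau>. sqrt \<tau>) \<tau> = 1 / (3 * \<tau> * (sqrt \<tau> * sqrt \<tau>))"
    unfolding Rp_def by simp
  also have "sqrt \<tau> * sqrt \<tau> = \<tau>" using assms by simp
  finally show ?thesis by (simp add: power2_eq_square)
qed

lemma deriv_Rp_sqrt:
  assumes "\<tau> > 0"
  shows "deriv (Rp (\<lambda>\<tau>. sqrt \<tau>)) \<tau> = - 2 / (3 * \<tau> ^ 3)"
proof (rule deriv_eq_if_eventually_eq)
  show "\<forall>\<^sub>F t in nhds \<tau>. Rp (\<lambda>\<tau>. sqrt \<tau>) t = 1 / (3 * t\<^sup>2)"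
    using eventually_nhds_pos[OF assms] by (rule eventually_mono) (rule Rp_sqrt)
  show "((\<lambda>t. 1 / (3 * t\<^sup>2)) has_real_derivative - 2 / (3 * \<tau> ^ 3)) (at \<tau>)"
    using assms
    by (auto intro!: derivative_eq_intros simp: field_simps power2_eq_square power3_eq_cube)
qed

text \<open>The ratios \<open>\<rho>/p\<close> and \<open>\<partial>\<^sub>\<tau>\<rho>/\<partial>\<^sub>\<tau>p\<close> of the model, as functions of \<open>P = 1/(\<alpha> + ln \<tau>)\<close>
  and \<open>Q = 1/(\<beta> + ln \<tau>)\<close> (see \<open>rho_eq_ratio\<close> and \<open>rho_dot_eq\<close> below).\<close>
definition rho_ratio :: "real \<Rightarrow> real \<Rightarrow> real" where
  "rho_ratio x y = (1 + 2 * x) * (1 + 2 * y)"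

definition rho_dot_ratio :: "real \<Rightarrow> real \<Rightarrow> real" where
  "rho_dot_ratio x y = (1 + 2 * x) * (1 + 2 * y) + x\<^sup>2 * (1 + 2 * y) + y\<^sup>2 * (1 + 2 * x)"

lemma has_derivative_rho_ratio:
  "(case_prod rho_ratio has_derivative (\<lambda>(h, k). 2 * (1 + 2 * y) * h + 2 * (1 + 2 * x) * k))
     (at (x, y))"
  unfolding rho_ratio_def case_prod_unfold
  by (auto intro!: derivative_eq_intros simp: fun_eq_iff algebra_simps)

lemma has_derivative_rho_dot_ratio:
  "(case_prod rho_dot_ratio has_derivative
      (\<lambda>(h, k). 2 * ((1 + x) * (1 + 2 * y) + y\<^sup>2) * h + 2 * ((1 + y) * (1 + 2 * x) + x\<^sup>2) * k))
     (at (x, y))"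
  unfolding rho_dot_ratio_def case_prod_unfold
  by (auto intro!: derivative_eq_intros simp: fun_eq_iff algebra_simps power2_eq_square)

lemma has_derivative_inverse_rho_ratio:
  assumes "rho_ratio x y \<noteq> 0"
  shows "((\<lambda>z. 1 / case_prod rho_ratio z) has_derivative
           (\<lambda>(h, k). (- 2 * (1 + 2 * y) / (rho_ratio x y)\<^sup>2) * h
                     + (- 2 * (1 + 2 * x) / (rho_ratio x y)\<^sup>2) * k)) (at (x, y))"
  using has_derivative_inverse_pair[OF has_derivative_rho_ratio] assms
  by (simp add: case_prod_unfold)

lemma has_derivative_inverse_rho_dot_ratio:
  assumes "rho_dot_ratio x y \<noteq> 0"
  shows "((\<lambda>z. 1 / case_prod rho_dot_ratio z) has_derivative
           (\<lambda>(h, k). (- 2 * ((1 + x) * (1 + 2 * y) + y\<^sup>2) / (rho_dot_ratio x y)\<^sup>2) * h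
                     + (- 2 * ((1 + y) * (1 + 2 * x) + x\<^sup>2) / (rho_dot_ratio x y)\<^sup>2) * k))
         (at (x, y))"
  using has_derivative_inverse_pair[OF has_derivative_rho_dot_ratio] assms
  by (simp add: case_prod_unfold)

lemma jacobian_inverse_rho_ratios:
  assumes "rho_dot_ratio x y \<noteq> 0" "rho_ratio x y \<noteq> 0"
  shows "(- 2 * ((1 + x) * (1 + 2 * y) + y\<^sup>2) / (rho_dot_ratio x y)\<^sup>2)
           * (- 2 * (1 + 2 * x) / (rho_ratio x y)\<^sup>2)
         - (- 2 * ((1 + y) * (1 + 2 * x) + x\<^sup>2) / (rho_dot_ratio x y)\<^sup>2)
           * (- 2 * (1 + 2 * y) / (rho_ratio x y)\<^sup>2)
       = 4 * (x - y) * (1 + x + y + 2 * x * y) / (rho_dot_ratio x y * rho_ratio x y)\<^sup>2"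
proof -
  have "((1 + x) * (1 + 2 * y) + y\<^sup>2) * (1 + 2 * x) - ((1 + y) * (1 + 2 * x) + x\<^sup>2) * (1 + 2 * y)
          = (x - y) * (1 + x + y + 2 * x * y)"
    by (simp add: algebra_simps power2_eq_square)
  then show ?thesis
    using assms by (simp add: field_simps power2_eq_square)
qed

locale sqrt_log_model =
  fixes a b :: "real \<Rightarrow> real" and U :: "real set"
  assumes open_U: "open U"
    and a_differentiable: "\<And>r. r \<in> U \<Longrightarrow> a differentiable at r"
    and b_differentiable: "\<And>r. r \<in> U \<Longrightarrow> b differentiable at r"
    and da_differentiable: "\<And>r. r \<in> U \<Longrightarrow> deriv a differentiable at r"
    and db_differentiable: "\<And>r. r \<in> U \<Longrightarrow> deriv b differentiable at r"
    and b_nonzero: "\<And>r. r \<in> U \<Longrightarrow> b r \<noteq> 0"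
    and db_nonzero: "\<And>r. r \<in> U \<Longrightarrow> deriv b r \<noteq> 0"
begin

abbreviation f :: "real \<Rightarrow> real" where "f \<equiv> \<lambda>\<tau>. sqrt \<tau>"
abbreviation g :: "real \<Rightarrow> real" where "g \<equiv> \<lambda>\<tau>. sqrt \<tau> * ln \<tau>"

definition \<alpha> :: "real \<Rightarrow> real" where "\<alpha> r = a r / b r"

definition \<beta> :: "real \<Rightarrow> real" where "\<beta> r = deriv a r / deriv b r"

definition P :: "real \<Rightarrow> real \<Rightarrow> real" where "P \<tau> r = 1 / (\<alpha> r + ln \<tau>)"

definition Q :: "real \<Rightarrow> real \<Rightarrow> real" where "Q \<tau> r = 1 / (\<beta> r + ln \<tau>)"

lemma alpha_has_derivative:
  assumes "r \<in> U"
  shows "(\<alpha> has_real_derivative deriv b r * (\<beta> r - \<alpha> r) / b r) (at r)"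
proof -
  have "(\<alpha> has_real_derivative (deriv a r * b r - a r * deriv b r) / (b r * b r)) (at r)"
    unfolding \<alpha>_def[abs_def] using assms a_differentiable b_differentiable b_nonzero
    by (auto intro!: derivative_eq_intros simp: DERIV_deriv_iff_real_differentiable[symmetric])
  moreover have "(deriv a r * b r - a r * deriv b r) / (b r * b r) = deriv b r * (\<beta> r - \<alpha> r) / b r"
    using assms b_nonzero db_nonzero by (simp add: \<alpha>_def \<beta>_def field_simps)
  ultimately show ?thesis by simp
qed

lemma alpha_differentiable: "r \<in> U \<Longrightarrow> \<alpha> differentiable at r"
  using alpha_has_derivative real_differentiable_def by blast

lemma beta_differentiable:
  assumes "r \<in> U"
  shows "\<beta> differentiable at r"
proof -
  have "(\<beta> has_real_derivative
          (deriv (deriv a) r * deriv b r - deriv a r * deriv (deriv b) r) / (deriv b r * deriv b r))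
          (at r)"
    unfolding \<beta>_def[abs_def] using assms da_differentiable db_differentiable db_nonzero
    by (auto intro!: derivative_eq_intros simp: DERIV_deriv_iff_real_differentiable[symmetric])
  then show ?thesis using real_differentiable_def by blast
qed

lemma Z_eq: "r \<in> U \<Longrightarrow> RZ f g a b \<tau> r = sqrt \<tau> * b r * (\<alpha> r + ln \<tau>)"
  using b_nonzero by (simp add: RZ_def \<alpha>_def field_simps)

lemma dZ_dr:
  assumes r: "r \<in> U"
  shows "deriv (\<lambda>s. RZ f g a b \<tau> s) r = sqrt \<tau> * deriv b r * (\<beta> r + ln \<tau>)"
proof -
  have "((\<lambda>s. RZ f g a b \<tau> s) has_real_derivative sqrt \<tau> * (deriv a r + deriv b r * ln \<tau>)) (at r)"
    unfolding RZ_def using r a_differentiable b_differentiable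
    by (auto intro!: derivative_eq_intros
        simp: field_simps DERIV_deriv_iff_real_differentiable[symmetric])
  then show ?thesis
    using r db_nonzero by (simp add: DERIV_imp_deriv \<beta>_def field_simps)
qed

lemma dZ_dtau:
  "\<tau> > 0 \<Longrightarrow> deriv (\<lambda>t. RZ f g a b t s) \<tau> = (a s + b s * (ln \<tau> + 2)) / (2 * sqrt \<tau>)"
  unfolding RZ_def by (rule DERIV_imp_deriv) (auto intro!: derivative_eq_intros simp: field_simps)

lemma d2Z:
  assumes "\<tau> > 0" "r \<in> U"
  shows "deriv (\<lambda>s. deriv (\<lambda>t. RZ f g a b t s) \<tau>) r = deriv b r * (\<beta> r + ln \<tau> + 2) / (2 * sqrt \<tau>)"
proof -
  have "((\<lambda>s. (a s + b s * (ln \<tau> + 2)) / (2 * sqrt \<tau>)) has_real_derivative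
          (deriv a r + deriv b r * (ln \<tau> + 2)) / (2 * sqrt \<tau>)) (at r)"
    using assms a_differentiable b_differentiable
    by (intro DERIV_cdivide)
      (auto intro!: derivative_eq_intros simp: DERIV_deriv_iff_real_differentiable[symmetric])
  moreover have "deriv a r + deriv b r * (ln \<tau> + 2) = deriv b r * (\<beta> r + ln \<tau> + 2)"
    using assms db_nonzero by (simp add: \<beta>_def field_simps)
  ultimately show ?thesis by (simp add: dZ_dtau[OF assms(1)] DERIV_imp_deriv)
qed

lemma rho_eq:
  assumes \<tau>: "\<tau> > 0" and r: "r \<in> U"
  shows "Rrho f g a b \<tau> r = 1 / (3 * \<tau>\<^sup>2) * ((2 + \<alpha> r + ln \<tau>) * (2 + \<beta> r + ln \<tau>))
                      / ((\<alpha> r + ln \<tau>) * (\<beta> r + ln \<tau>))"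
proof -
  define u where "u = \<alpha> r + ln \<tau>"
  define v where "v = \<beta> r + ln \<tau>"
  define s where "s = sqrt \<tau>"
  have s: "s > 0" "\<tau> = s * s" using \<tau> by (simp_all add: s_def)
  have b: "b r \<noteq> 0" "deriv b r \<noteq> 0" using r b_nonzero db_nonzero by auto
  have Zdot: "deriv (\<lambda>t. RZ f g a b t r) \<tau> = b r * (u + 2) / (2 * s)"
    using \<tau> b by (simp add: dZ_dtau u_def s_def \<alpha>_def field_simps)
  have "Rrho f g a b \<tau> r = 4 / 3 * ((b r * (u + 2) / (2 * s)) * (deriv b r * (v + 2) / (2 * s)))
                  / ((s * b r * u) * (s * deriv b r * v))"
    unfolding Rrho_def Let_def Zdot d2Z[OF \<tau> r] Z_eq[OF r, of \<tau>] dZ_dr[OF r]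
    by (simp add: u_def v_def s_def add.assoc)
  also have "\<dots> = 1 / (3 * \<tau>\<^sup>2) * ((2 + u) * (2 + v)) / (u * v)"
    using s b by (cases "u * v = 0") (auto simp: field_simps power2_eq_square)
  finally show ?thesis by (simp add: u_def v_def add.assoc)
qed

lemma rho_eq_ratio:
  assumes "\<tau> > 0" "r \<in> U" "\<alpha> r + ln \<tau> \<noteq> 0" "\<beta> r + ln \<tau> \<noteq> 0"
  shows "Rrho f g a b \<tau> r = rho_ratio (P \<tau> r) (Q \<tau> r) / (3 * \<tau>\<^sup>2)"
  using assms by (simp add: rho_eq P_def Q_def rho_ratio_def field_simps)

lemma P_has_derivative_tau:
  assumes "\<tau> > 0" "\<alpha> r + ln \<tau> \<noteq> 0"
  shows "((\<lambda>t. P t r) has_real_derivative - (P \<tau> r)\<^sup>2 / \<tau>) (at \<tau>)"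
  unfolding P_def using assms
  by (auto intro!: derivative_eq_intros simp: field_simps power2_eq_square)

lemma Q_has_derivative_tau:
  assumes "\<tau> > 0" "\<beta> r + ln \<tau> \<noteq> 0"
  shows "((\<lambda>t. Q t r) has_real_derivative - (Q \<tau> r)\<^sup>2 / \<tau>) (at \<tau>)"
  unfolding Q_def using assms
  by (auto intro!: derivative_eq_intros simp: field_simps power2_eq_square)

lemma P_has_derivative_r:
  assumes "r \<in> U" "\<alpha> r + ln \<tau> \<noteq> 0"
  shows "((\<lambda>s. P \<tau> s) has_real_derivative - (P \<tau> r)\<^sup>2 * deriv \<alpha> r) (at r)"
  unfolding P_def using assms alpha_differentiable
  by (auto intro!: derivative_eq_intros
      simp: field_simps power2_eq_square DERIV_deriv_iff_real_differentiable[symmetric])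

lemma Q_has_derivative_r:
  assumes "r \<in> U" "\<beta> r + ln \<tau> \<noteq> 0"
  shows "((\<lambda>s. Q \<tau> s) has_real_derivative - (Q \<tau> r)\<^sup>2 * deriv \<beta> r) (at r)"
  unfolding Q_def using assms beta_differentiable
  by (auto intro!: derivative_eq_intros
      simp: field_simps power2_eq_square DERIV_deriv_iff_real_differentiable[symmetric])

lemma wedge_coeff_P_Q:
  assumes "\<tau> > 0" "r \<in> U" "\<alpha> r + ln \<tau> \<noteq> 0" "\<beta> r + ln \<tau> \<noteq> 0"
  shows "wedge_coeff P Q \<tau> r = (P \<tau> r)\<^sup>2 * (Q \<tau> r)\<^sup>2 * (deriv \<beta> r - deriv \<alpha> r) / \<tau>"
  unfolding wedge_coeff_def
    DERIV_imp_deriv[OF P_has_derivative_tau[OF assms(1,3)]]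
    DERIV_imp_deriv[OF Q_has_derivative_tau[OF assms(1,4)]]
    DERIV_imp_deriv[OF P_has_derivative_r[OF assms(2,3)]]
    DERIV_imp_deriv[OF Q_has_derivative_r[OF assms(2,4)]]
  using assms(1) by (simp add: field_simps)

lemma eventually_regular:
  assumes "\<tau> > 0" "r \<in> U" "\<alpha> r + ln \<tau> \<noteq> 0" "\<beta> r + ln \<tau> \<noteq> 0"
  shows "\<forall>\<^sub>F t in nhds \<tau>. t > 0 \<and> \<alpha> r + ln t \<noteq> 0 \<and> \<beta> r + ln t \<noteq> 0"
    and "\<forall>\<^sub>F s in nhds r. s \<in> U \<and> \<alpha> s + ln \<tau> \<noteq> 0 \<and> \<beta> s + ln \<tau> \<noteq> 0"
proof -
  have "isCont (\<lambda>t. \<alpha> r + ln t) \<tau>" "isCont (\<lambda>t. \<beta> r + ln t) \<tau>"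
    using assms(1) by (auto intro!: continuous_intros)
  then show "\<forall>\<^sub>F t in nhds \<tau>. t > 0 \<and> \<alpha> r + ln t \<noteq> 0 \<and> \<beta> r + ln t \<noteq> 0"
    using eventually_nhds_pos[OF assms(1)] isCont_eventually_nhds_neq assms(3,4)
    by (auto intro!: eventually_conj)
  have "isCont (\<lambda>s. \<alpha> s + ln \<tau>) r" "isCont (\<lambda>s. \<beta> s + ln \<tau>) r"
    using alpha_differentiable[OF assms(2)] beta_differentiable[OF assms(2)]
    by (auto intro!: continuous_intros differentiable_imp_continuous_within)
  then show "\<forall>\<^sub>F s in nhds r. s \<in> U \<and> \<alpha> s + ln \<tau> \<noteq> 0 \<and> \<beta> s + ln \<tau> \<noteq> 0"
    using eventually_nhds_in_open[OF open_U assms(2)] isCont_eventually_nhds_neq assms(3,4)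
    by (auto intro!: eventually_conj)
qed

lemma rho_dot_eq:
  assumes "\<tau> > 0" "r \<in> U" "\<alpha> r + ln \<tau> \<noteq> 0" "\<beta> r + ln \<tau> \<noteq> 0"
  shows "deriv (\<lambda>t. Rrho f g a b t r) \<tau> = - 2 * rho_dot_ratio (P \<tau> r) (Q \<tau> r) / (3 * \<tau> ^ 3)"
proof (rule deriv_eq_if_eventually_eq)
  show "\<forall>\<^sub>F t in nhds \<tau>. Rrho f g a b t r = rho_ratio (P t r) (Q t r) / (3 * t\<^sup>2)"
    using eventually_regular(1)[OF assms] by (rule eventually_mono) (use assms(2) rho_eq_ratio in auto)
  show "((\<lambda>t. rho_ratio (P t r) (Q t r) / (3 * t\<^sup>2)) has_real_derivative
          - 2 * rho_dot_ratio (P \<tau> r) (Q \<tau> r) / (3 * \<tau> ^ 3)) (at \<tau>)"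
    unfolding rho_ratio_def
    using assms(1) P_has_derivative_tau[OF assms(1,3)] Q_has_derivative_tau[OF assms(1,4)]
    by (auto intro!: derivative_eq_intros
        simp: rho_dot_ratio_def field_simps power2_eq_square power3_eq_cube)
qed

lemma chi_eq:
  assumes "\<tau> > 0" "r \<in> U" "\<alpha> r + ln \<tau> \<noteq> 0" "\<beta> r + ln \<tau> \<noteq> 0"
  shows "Rchi f g a b \<tau> r = 1 / rho_dot_ratio (P \<tau> r) (Q \<tau> r)"
  using assms(1) unfolding Rchi_def rho_dot_eq[OF assms] deriv_Rp_sqrt[OF assms(1)]
  by (simp add: field_simps)

lemma pi_eq:
  assumes "\<tau> > 0" "r \<in> U" "\<alpha> r + ln \<tau> \<noteq> 0" "\<beta> r + ln \<tau> \<noteq> 0"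
  shows "Rpi f g a b \<tau> r = 1 / rho_ratio (P \<tau> r) (Q \<tau> r)"
  using assms(1) unfolding Rpi_def rho_eq_ratio[OF assms] Rp_sqrt[OF assms(1)]
  by (simp add: field_simps)

lemma Rdom_iff:
  "(\<tau>, r) \<in> Rdom f g a b U \<longleftrightarrow>
     \<tau> > 0 \<and> r \<in> U \<and> \<alpha> r + ln \<tau> \<noteq> 0 \<and> \<beta> r + ln \<tau> \<noteq> 0
     \<and> rho_ratio (P \<tau> r) (Q \<tau> r) \<noteq> 0 \<and> rho_dot_ratio (P \<tau> r) (Q \<tau> r) \<noteq> 0"
proof (cases "\<tau> > 0 \<and> r \<in> U \<and> \<alpha> r + ln \<tau> \<noteq> 0 \<and> \<beta> r + ln \<tau> \<noteq> 0")
  case True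
  then show ?thesis
    unfolding Rdom_def using rho_eq_ratio rho_dot_eq Z_eq dZ_dr b_nonzero db_nonzero by auto
next
  case False
  then show ?thesis
    unfolding Rdom_def using Z_eq dZ_dr by auto
qed

lemma wedge_chi_pi:
  assumes "(\<tau>, r) \<in> Rdom f g a b U"
  shows "wedge_coeff (Rchi f g a b) (Rpi f g a b) \<tau> r
           = (let p = P \<tau> r; q = Q \<tau> r in
                4 * (p - q) * (1 + p + q + 2 * p * q) * p\<^sup>2 * q\<^sup>2
                  / (\<tau> * (rho_dot_ratio p q * rho_ratio p q)\<^sup>2))
             * (deriv \<beta> r - deriv \<alpha> r)"
proof -
  have reg: "\<tau> > 0" "r \<in> U" "\<alpha> r + ln \<tau> \<noteq> 0" "\<beta> r + ln \<tau> \<noteq> 0"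
    and G: "rho_dot_ratio (P \<tau> r) (Q \<tau> r) \<noteq> 0" and F: "rho_ratio (P \<tau> r) (Q \<tau> r) \<noteq> 0"
    using assms by (simp_all add: Rdom_iff)
  have "wedge_coeff (Rchi f g a b) (Rpi f g a b) \<tau> r
          = wedge_coeff (\<lambda>t s. 1 / case_prod rho_dot_ratio (P t s, Q t s))
                        (\<lambda>t s. 1 / case_prod rho_ratio (P t s, Q t s)) \<tau> r"
  proof (rule wedge_coeff_cong_ev)
    show "\<forall>\<^sub>F t in nhds \<tau>. Rchi f g a b t r = 1 / case_prod rho_dot_ratio (P t r, Q t r)
                          \<and> Rpi f g a b t r = 1 / case_prod rho_ratio (P t r, Q t r)"
      using eventually_regular(1)[OF reg] by (rule eventually_mono) (simp add: reg chi_eq pi_eq)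
    show "\<forall>\<^sub>F s in nhds r. Rchi f g a b \<tau> s = 1 / case_prod rho_dot_ratio (P \<tau> s, Q \<tau> s)
                          \<and> Rpi f g a b \<tau> s = 1 / case_prod rho_ratio (P \<tau> s, Q \<tau> s)"
      using eventually_regular(2)[OF reg] by (rule eventually_mono) (simp add: reg chi_eq pi_eq)
  qed
  also have "\<dots> = 4 * (P \<tau> r - Q \<tau> r) * (1 + P \<tau> r + Q \<tau> r + 2 * P \<tau> r * Q \<tau> r)
                    / (rho_dot_ratio (P \<tau> r) (Q \<tau> r) * rho_ratio (P \<tau> r) (Q \<tau> r))\<^sup>2
                  * wedge_coeff P Q \<tau> r"
    unfolding jacobian_inverse_rho_ratios[OF G F, symmetric]
    using P_has_derivative_tau[OF reg(1,3)] Q_has_derivative_tau[OF reg(1,4)]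
      P_has_derivative_r[OF reg(2,3)] Q_has_derivative_r[OF reg(2,4)]
    by (intro wedge_coeff_compose G F
        has_derivative_inverse_rho_dot_ratio has_derivative_inverse_rho_ratio;
        unfold real_differentiable_def; blast)
  finally show ?thesis
    by (simp add: wedge_coeff_P_Q[OF reg] Let_def divide_inverse mult_ac)
qed

text \<open>Choose \<open>\<tau>\<close> with \<open>\<alpha> r + ln \<tau>\<close> and \<open>\<beta> r + ln \<tau>\<close> both positive; then \<open>P, Q > 0\<close> and
  \<open>P \<noteq> Q\<close>, so every factor in front of \<open>deriv \<beta> r - deriv \<alpha> r\<close> in \<open>wedge_chi_pi\<close> is nonzero.\<close>
lemma deriv_beta_eq_deriv_alpha_if_wedge_vanishes:
  assumes W: "\<forall>(\<tau>, r)\<in>Rdom f g a b U. wedge_coeff (Rchi f g a b) (Rpi f g a b) \<tau> r = 0"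
    and r: "r \<in> U" and ne: "\<beta> r \<noteq> \<alpha> r"
  shows "deriv \<beta> r = deriv \<alpha> r"
proof -
  define m where "m = 1 + \<bar>\<beta> r - \<alpha> r\<bar>"
  define \<tau> where "\<tau> = exp (m - \<alpha> r)"
  have \<tau>: "\<tau> > 0" and u: "\<alpha> r + ln \<tau> = m" and v: "\<beta> r + ln \<tau> = m + (\<beta> r - \<alpha> r)"
    by (simp_all add: \<tau>_def)
  have m: "m > 0" "m + (\<beta> r - \<alpha> r) > 0" by (auto simp: m_def)
  define p where "p = P \<tau> r"
  define q where "q = Q \<tau> r"
  have pq: "p > 0" "q > 0" "p \<noteq> q"
    using m ne by (auto simp: p_def q_def P_def Q_def u v)
  then have F: "rho_ratio p q > 0" and G: "rho_dot_ratio p q > 0"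
    by (auto simp: rho_ratio_def rho_dot_ratio_def intro!: add_pos_nonneg)
  have "(\<tau>, r) \<in> Rdom f g a b U"
    using \<tau> r m F G by (simp add: Rdom_iff u v flip: p_def q_def)
  then have "4 * (p - q) * (1 + p + q + 2 * p * q) * p\<^sup>2 * q\<^sup>2
               / (\<tau> * (rho_dot_ratio p q * rho_ratio p q)\<^sup>2) * (deriv \<beta> r - deriv \<alpha> r) = 0"
    using W wedge_chi_pi by (auto simp: p_def q_def Let_def)
  moreover have "1 + p + q + 2 * p * q > 0" using pq by (simp add: add_pos_pos)
  ultimately show ?thesis using pq \<tau> F G by simp
qed

lemma wedge_chi_pi_vanishes_iff:
  assumes "connected U"
  shows "(\<forall>(\<tau>, r)\<in>Rdom f g a b U. wedge_coeff (Rchi f g a b) (Rpi f g a b) \<tau> r = 0)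
           \<longleftrightarrow> (\<exists>c. \<forall>r\<in>U. \<beta> r = \<alpha> r + c)"
proof
  assume "\<forall>(\<tau>, r)\<in>Rdom f g a b U. wedge_coeff (Rchi f g a b) (Rpi f g a b) \<tau> r = 0"
  then have "\<exists>c. \<forall>r\<in>U. \<beta> r - \<alpha> r = c"
  proof (intro DERIV_zero_off_zeros_connected_imp_constant[OF open_U assms,
        of _ "\<lambda>r. deriv \<beta> r - deriv \<alpha> r"])
    show "((\<lambda>r. \<beta> r - \<alpha> r) has_real_derivative deriv \<beta> r - deriv \<alpha> r) (at r)" if "r \<in> U" for r
      using alpha_differentiable[OF that] beta_differentiable[OF that]
      by (auto intro!: derivative_eq_intros simp: DERIV_deriv_iff_real_differentiable[symmetric])
  qed (use deriv_beta_eq_deriv_alpha_if_wedge_vanishes in auto)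
  then show "\<exists>c. \<forall>r\<in>U. \<beta> r = \<alpha> r + c" by (metis add.commute diff_add_cancel)
next
  assume "\<exists>c. \<forall>r\<in>U. \<beta> r = \<alpha> r + c"
  then obtain c where c: "\<And>r. r \<in> U \<Longrightarrow> \<beta> r = \<alpha> r + c" by blast
  have "deriv \<beta> r = deriv \<alpha> r" if r: "r \<in> U" for r
  proof (rule deriv_eq_if_eventually_eq)
    show "\<forall>\<^sub>F s in nhds r. \<beta> s = \<alpha> s + c"
      using eventually_nhds_in_open[OF open_U r] by (rule eventually_mono) (rule c)
    show "((\<lambda>s. \<alpha> s + c) has_real_derivative deriv \<alpha> r) (at r)"
      using alpha_differentiable[OF r]
      by (auto intro!: derivative_eq_intros simp: DERIV_deriv_iff_real_differentiable[symmetric])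
  qed
  then show "\<forall>(\<tau>, r)\<in>Rdom f g a b U. wedge_coeff (Rchi f g a b) (Rpi f g a b) \<tau> r = 0"
    by (auto simp: wedge_chi_pi Rdom_iff)
qed

lemma shift_const_nonzero:
  assumes "connected U" and nonconst: "\<not> (\<exists>k. \<forall>r\<in>U. \<alpha> r = k)"
    and c: "\<forall>r\<in>U. \<beta> r = \<alpha> r + c"
  shows "c \<noteq> 0"
proof
  assume "c = 0"
  then have "(\<alpha> has_real_derivative 0) (at r)" if "r \<in> U" for r
    using alpha_has_derivative[OF that] c that by simp
  then show False
    using DERIV_zero_connected_imp_constant[OF open_U assms(1), of \<alpha>] nonconst by blast
qed

lemma b_eq_const_mult_exp:
  assumes "connected U" and c: "\<forall>r\<in>U. \<beta> r = \<alpha> r + c" and "c \<noteq> 0"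
  shows "\<exists>K. \<forall>r\<in>U. b r = K * exp (\<alpha> r / c)"
proof -
  have "((\<lambda>s. b s * exp (- (\<alpha> s / c))) has_real_derivative 0) (at r)" if r: "r \<in> U" for r
    using alpha_has_derivative[OF r] b_differentiable[OF r] b_nonzero[OF r] c r \<open>c \<noteq> 0\<close>
    by (auto intro!: derivative_eq_intros
        simp: DERIV_deriv_iff_real_differentiable[symmetric] field_simps)
  then obtain K where K: "\<And>r. r \<in> U \<Longrightarrow> b r * exp (- (\<alpha> r / c)) = K"
    using DERIV_zero_connected_imp_constant[OF open_U assms(1), of "\<lambda>s. b s * exp (- (\<alpha> s / c))"]
    by blast
  have "b r = K * exp (\<alpha> r / c)" if "r \<in> U" for r
    using K[OF that] by (simp add: exp_minus field_simps)
  then show ?thesis by blast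
qed

end

theorem mainTheorem9:
  fixes a b :: "real \<Rightarrow> real" and U :: "real set"
  defines "f \<equiv> (\<lambda>\<tau>. sqrt \<tau>)"
      and "g \<equiv> (\<lambda>\<tau>. sqrt \<tau> * ln \<tau>)"
      and "\<alpha> \<equiv> (\<lambda>r. a r / b r)"
      and "\<beta> \<equiv> (\<lambda>r. deriv a r / deriv b r)"
  assumes U: "open U" "connected U" "U \<noteq> {}"
      and smooth: "smooth_on U a" "smooth_on U b"
      and b_nz: "\<forall>r\<in>U. b r \<noteq> 0"
      and db_nz: "\<forall>r\<in>U. deriv b r \<noteq> 0"
      and nonconst: "\<not> (\<exists>k. \<forall>r\<in>U. \<alpha> r = k)"
  shows "((\<forall>(\<tau>, r)\<in>Rdom f g a b U. wedge_coeff (Rchi f g a b) (Rpi f g a b) \<tau> r = 0)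
            \<longleftrightarrow> (\<exists>c. \<forall>r\<in>U. \<beta> r = \<alpha> r + c))
       \<and> (\<forall>c. (\<forall>r\<in>U. \<beta> r = \<alpha> r + c) \<longrightarrow>
            c \<noteq> 0
          \<and> (\<exists>K. \<forall>r\<in>U. b r = K * exp (\<alpha> r / c))
          \<and> (\<forall>\<tau>>0. Rp f \<tau> = 1 / (3 * \<tau>\<^sup>2))
          \<and> (\<forall>\<tau>>0. \<forall>r\<in>U. Rrho f g a b \<tau> r =
                1 / (3 * \<tau>\<^sup>2) * ((2 + \<alpha> r + ln \<tau>) * (2 + \<alpha> r + c + ln \<tau>))
                  / ((\<alpha> r + ln \<tau>) * (\<alpha> r + c + ln \<tau>))))"
proof -
  interpret M: sqrt_log_model a b U
    using U(1) smooth b_nz db_nz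
    by unfold_locales (auto intro: smooth_on_differentiable smooth_on_deriv_differentiable)
  have \<alpha>: "\<alpha> = M.\<alpha>" and \<beta>: "\<beta> = M.\<beta>"
    by (simp_all add: fun_eq_iff \<alpha>_def \<beta>_def M.\<alpha>_def M.\<beta>_def)
  show ?thesis
    unfolding f_def g_def \<alpha> \<beta>
    using M.wedge_chi_pi_vanishes_iff[OF U(2)] M.shift_const_nonzero[OF U(2) nonconst[unfolded \<alpha>]]
      M.b_eq_const_mult_exp[OF U(2)] Rp_sqrt M.rho_eq
    by (auto simp: add.assoc)
qed

end
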